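(* Fix $\alpha\in(0,1)$ and $\delta\ge 0$. For each integer $m$ (large enough that $m'\ge 2$) let $m'=\lfloor\alpha m\rfloor$ and define $h_\delta(i)$ for integers $i\ge m'$ by $h_\delta(m')=1$ and, for $i>m'$, $$h_\delta(i)=\Big(1-\frac2i\Big)h_\delta(i-1)+\frac{\delta}{i}\cdot\frac{m'(m'-1)}{(i-1)(i-2)}\Big[1-\frac{m'}{i-1}\Big].$$ Then $$\liminf_{m\to\infty}\frac1m\sum_{i=m'+1}^{m}h_\delta(i)\ \ge\ \alpha-\alpha^2+\delta\alpha^2\ln\alpha+\frac{\delta}{2}\left(\alpha-\alpha^3\right).$$ *)

theory Defs
  imports "HOL-Analysis.Analysis"
begin

definition mprime :: "real \<Rightarrow> nat \<Rightarrow> nat" where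
  "mprime \<alpha> m = nat \<lfloor>\<alpha> * real m\<rfloor>"

fun hrec :: "real \<Rightarrow> nat \<Rightarrow> nat \<Rightarrow> real" where
  "hrec d mp 0 = 1"
| "hrec d mp (Suc k) =
     (let i = real (mp + Suc k) in
       (1 - 2 / i) * hrec d mp k
       + d / i * (real mp * (real mp - 1) / ((i - 1) * (i - 2))) * (1 - real mp / (i - 1)))"

definition hdelta :: "real \<Rightarrow> nat \<Rightarrow> nat \<Rightarrow> real" where
  "hdelta d mp i = hrec d mp (i - mp)"

end

theory Submission
  imports Defs
begin

text \<open>Writing N = m' and g(i) = i (i - 1) h(i), the recursion becomes
  g(i) = g(i-1) + \<delta> N (N-1) (i-1-N) / ((i-1)(i-2)), and summing the increments against
  ln gives g(i) \<ge> N (N-1) (1 + \<delta> (ln (i/N) + N/i - 1)) up to O(1/N). Hence h(i) is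
  bounded below by the profile G(i/N), with G(x) = (1 + \<delta> (ln x + 1/x - 1)) / x^2, up
  to O(1/N). The average of h over (m', m] is then a Riemann sum of G over [1, m/m'],
  which tends to \<alpha> times the integral of G over [1, 1/\<alpha>]; that integral evaluates to
  the claimed bound.\<close>

lemma mean_slope_le_right_endpoint:
  fixes F f f' :: "real \<Rightarrow> real"
  assumes "a < b" and "C \<ge> 0"
    and F: "\<And>x. a \<le> x \<Longrightarrow> x \<le> b \<Longrightarrow> (F has_real_derivative f x) (at x)"
    and f: "\<And>x. a \<le> x \<Longrightarrow> x \<le> b \<Longrightarrow> (f has_real_derivative f' x) (at x)"
    and f'_ge: "\<And>x. a \<le> x \<Longrightarrow> x \<le> b \<Longrightarrow> f' x \<ge> -C"
  shows "(F b - F a) / (b - a) - C * (b - a) \<le> f b"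
proof -
  obtain z where z: "a < z" "z < b" and Fz: "F b - F a = (b - a) * f z"
    using MVT2[OF \<open>a < b\<close>, of F f] F by force
  obtain w where w: "z < w" "w < b" and fw: "f b - f z = (b - z) * f' w"
    using MVT2[OF \<open>z < b\<close>, of f f'] f z by force
  have "(b - z) * (-C) \<le> (b - z) * f' w"
    using f'_ge[of w] z w by (intro mult_left_mono) auto
  then have "- (C * (b - z)) \<le> (b - z) * f' w" by (simp add: mult.commute)
  moreover have "C * (b - z) \<le> C * (b - a)"
    using z \<open>C \<ge> 0\<close> by (intro mult_left_mono) auto
  moreover have "(F b - F a) / (b - a) = f z" using Fz \<open>a < b\<close> by simp
  ultimately show ?thesis using fw by linarith
qed

lemma sum_grid_ge_primitive_diff:
  fixes F f f' :: "real \<Rightarrow> real"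
  assumes "s > 0" and "C \<ge> 0"
    and F: "\<And>x. a \<le> x \<Longrightarrow> (F has_real_derivative f x) (at x)"
    and f: "\<And>x. a \<le> x \<Longrightarrow> (f has_real_derivative f' x) (at x)"
    and f'_ge: "\<And>x. a \<le> x \<Longrightarrow> f' x \<ge> -C"
  shows "(F (a + real k * s) - F a) / s - real k * C * s \<le> (\<Sum>i=1..k. f (a + real i * s))"
proof (induction k)
  case 0
  then show ?case by simp
next
  case (Suc k)
  let ?x = "a + real k * s" and ?y = "a + real (Suc k) * s"
  have "?x < ?y" "?x \<ge> a" using \<open>s > 0\<close> by simp_all
  then have "(F ?y - F ?x) / (?y - ?x) - C * (?y - ?x) \<le> f ?y"
    using \<open>C \<ge> 0\<close> F f f'_ge by (intro mean_slope_le_right_endpoint[where f' = f']) auto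
  moreover have "?y - ?x = s" by (simp add: algebra_simps)
  ultimately show ?case using Suc.IH by (simp add: diff_divide_distrib algebra_simps)
qed

lemma hrec_Suc_scaled:
  assumes "n \<ge> 2"
  shows "real (n + Suc k) * real (n + k) * hrec d n (Suc k)
           = real (n + k) * (real (n + k) - 1) * hrec d n k
             + d * real n * (real n - 1) * (real (n + k) - real n) / (real (n + k) * (real (n + k) - 1))"
proof -
  have step: "(a + 1) * a * ((1 - 2 / (a + 1)) * h + d / (a + 1) * (N * (N - 1) / (a * (a - 1))) * (1 - N / a))
      = a * (a - 1) * h + d * N * (N - 1) * (a - N) / (a * (a - 1))" if "a > 1" for a N h :: real
  proof -
    from that have "a \<noteq> 0" "a + 1 \<noteq> 0" by auto
    have decay: "(a + 1) * a * ((1 - 2 / (a + 1)) * h) = a * (a - 1) * h"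
      using \<open>a + 1 \<noteq> 0\<close> by (simp add: field_simps)
    have forcing: "(a + 1) * a * (d / (a + 1) * X * (1 - N / a)) = d * X * (a - N)" for X
    proof -
      have "(a + 1) * a * (d / (a + 1) * X * (1 - N / a)) = ((a + 1) * (d / (a + 1))) * X * (a * (1 - N / a))"
        by (simp only: ac_simps)
      also have "\<dots> = d * X * (a - N)"
        using \<open>a \<noteq> 0\<close> \<open>a + 1 \<noteq> 0\<close> by (simp add: right_diff_distrib)
      finally show ?thesis .
    qed
    show ?thesis unfolding distrib_left decay forcing by (simp add: mult.assoc)
  qed
  define a where "a = real (n + k)"
  have "real (n + Suc k) = a + 1" by (simp add: a_def)
  then have "hrec d n (Suc k) = (1 - 2 / (a + 1)) * hrec d n k
      + d / (a + 1) * (real n * (real n - 1) / ((a + 1 - 1) * (a + 1 - 2))) * (1 - real n / (a + 1 - 1))"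
    by (simp only: hrec.simps Let_def)
  moreover have "a + 1 - 1 = a" "a + 1 - 2 = a - 1" by simp_all
  moreover have "a > 1" using assms by (simp add: a_def)
  ultimately show ?thesis
    unfolding a_def[symmetric] \<open>real (n + Suc k) = a + 1\<close> using step by simp
qed

lemma hrec_lower_bound:
  assumes "n \<ge> 2" and "d \<ge> 0"
  shows "real n * (real n - 1)
           * (1 + d * (ln ((real (n + k) - 1) / (real n - 1)) + real n / (real (n + k) - 1) - real n / (real n - 1)))
         \<le> real (n + k) * (real (n + k) - 1) * hrec d n k"
proof (induction k)
  case 0
  then show ?case by simp
next
  case (Suc k)
  define N where "N = real n"
  define a where "a = real (n + k)"
  have "N \<ge> 2" "a \<ge> N" using \<open>n \<ge> 2\<close> by (simp_all add: N_def a_def)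
  have "a > 1" using \<open>N \<ge> 2\<close> \<open>a \<ge> N\<close> by simp
  have increment: "ln (a / (N - 1)) + N / a \<le> ln ((a - 1) / (N - 1)) + N / (a - 1) + (a - N) / (a * (a - 1))"
  proof -
    have "ln (a / (N - 1)) - ln ((a - 1) / (N - 1)) = ln (1 + 1 / (a - 1))"
      using \<open>N \<ge> 2\<close> \<open>a \<ge> N\<close> by (simp add: ln_div field_simps)
    also have "\<dots> \<le> 1 / (a - 1)"
      using \<open>N \<ge> 2\<close> \<open>a \<ge> N\<close> by (intro ln_add_one_self_le_self) simp
    also have "\<dots> = N / (a - 1) - (N - 1) / (a - 1)"
      by (simp add: diff_divide_distrib[symmetric])
    also have "(N - 1) / (a - 1) = N / a - (a - N) / (a * (a - 1))"
      using \<open>a > 1\<close> by (simp add: field_simps)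
    finally show ?thesis by simp
  qed
  have "d * N * (N - 1) * (ln (a / (N - 1)) + N / a)
        \<le> d * N * (N - 1) * ((ln ((a - 1) / (N - 1)) + N / (a - 1)) + (a - N) / (a * (a - 1)))"
    using increment \<open>d \<ge> 0\<close> \<open>N \<ge> 2\<close> by (intro mult_left_mono) auto
  then have increment_scaled: "d * N * (N - 1) * (ln (a / (N - 1)) + N / a)
        \<le> d * N * (N - 1) * (ln ((a - 1) / (N - 1)) + N / (a - 1)) + d * N * (N - 1) * (a - N) / (a * (a - 1))"
    by (simp only: distrib_left times_divide_eq_right)
  have expand: "N * (N - 1) * (1 + d * (X - Y)) = N * (N - 1) + d * N * (N - 1) * X - d * N * (N - 1) * Y"
    for X Y
    by (simp add: algebra_simps)
  have Suc_a: "real (n + Suc k) = a + 1" and "a + 1 - 1 = a" by (simp_all add: a_def)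
  show ?case
    using Suc.IH hrec_Suc_scaled[OF \<open>n \<ge> 2\<close>, of k d] increment_scaled
      expand[of "ln ((a - 1) / (N - 1)) + N / (a - 1)" "N / (N - 1)"]
      expand[of "ln (a / (N - 1)) + N / a" "N / (N - 1)"]
    unfolding N_def[symmetric] a_def[symmetric] Suc_a \<open>a + 1 - 1 = a\<close> by linarith
qed

definition h_profile :: "real \<Rightarrow> real \<Rightarrow> real" where
  "h_profile d x = (1 + d * (ln x + 1 / x - 1)) / x\<^sup>2"

definition h_profile_primitive :: "real \<Rightarrow> real \<Rightarrow> real" where
  "h_profile_primitive d x = - 1 / x - d * ln x / x - d / (2 * x\<^sup>2)"

definition h_profile_deriv :: "real \<Rightarrow> real \<Rightarrow> real" where
  "h_profile_deriv d x = (- 2 * x + 3 * d * x - 2 * d * x * ln x - 3 * d) / x ^ 4"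

lemma has_real_derivative_h_profile_primitive:
  "x > 0 \<Longrightarrow> (h_profile_primitive d has_real_derivative h_profile d x) (at x)"
  unfolding h_profile_primitive_def h_profile_def
  by (auto intro!: derivative_eq_intros simp: field_simps power2_eq_square)

lemma has_real_derivative_h_profile:
  "x > 0 \<Longrightarrow> (h_profile d has_real_derivative h_profile_deriv d x) (at x)"
  unfolding h_profile_deriv_def h_profile_def
  by (auto intro!: derivative_eq_intros simp: field_simps eval_nat_numeral)

lemma h_profile_deriv_ge:
  assumes "x \<ge> 1" and "d \<ge> 0"
  shows "h_profile_deriv d x \<ge> - (2 + 5 * d)"
proof -
  have "x ^ 1 \<le> x ^ 4" "x\<^sup>2 \<le> x ^ 4"
    using \<open>x \<ge> 1\<close> by (intro power_increasing; simp)+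
  have "1 \<le> x ^ 4" using \<open>x \<ge> 1\<close> by simp
  have "ln x \<le> x" using ln_le_minus_one[of x] \<open>x \<ge> 1\<close> by simp
  then have "x * ln x \<le> x\<^sup>2"
    using mult_left_mono[of "ln x" x x] \<open>x \<ge> 1\<close> by (simp add: power2_eq_square)
  then have "d * (x * ln x) \<le> d * x ^ 4"
    using \<open>x\<^sup>2 \<le> x ^ 4\<close> \<open>d \<ge> 0\<close> by (meson mult_left_mono order.trans)
  moreover have "d * 1 \<le> d * x ^ 4" using \<open>1 \<le> x ^ 4\<close> \<open>d \<ge> 0\<close> by (rule mult_left_mono)
  moreover have "0 \<le> d * x" using assms by simp
  ultimately have "- (2 + 5 * d) * x ^ 4 \<le> - 2 * x + 3 * d * x - 2 * d * x * ln x - 3 * d"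
    using \<open>x ^ 1 \<le> x ^ 4\<close> by (simp add: algebra_simps)
  moreover have "x ^ 4 > 0" using \<open>x \<ge> 1\<close> by simp
  ultimately show ?thesis unfolding h_profile_deriv_def by (simp add: pos_le_divide_eq)
qed

lemma falling2_ratio_bounds:
  fixes N I :: real
  assumes "N \<ge> 2" and "I \<ge> N + 1"
  shows "(N - 1)\<^sup>2 / I\<^sup>2 \<le> N * (N - 1) / (I * (I - 1))" and "N * (N - 1) / (I * (I - 1)) \<le> 1"
proof -
  have "I * (I - 1) > 0" using assms by simp
  have "(N - 1) * (I - 1) * ((N - 1) * I) \<le> N * I * ((N - 1) * I)"
    using assms by (intro mult_right_mono mult_mono) auto
  then have "(N - 1)\<^sup>2 * (I * (I - 1)) \<le> N * (N - 1) * I\<^sup>2"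
    by (simp add: power2_eq_square algebra_simps)
  then show "(N - 1)\<^sup>2 / I\<^sup>2 \<le> N * (N - 1) / (I * (I - 1))"
    using \<open>I * (I - 1) > 0\<close> assms by (simp add: divide_le_eq le_divide_eq)
  show "N * (N - 1) / (I * (I - 1)) \<le> 1"
    using assms \<open>I * (I - 1) > 0\<close> by (simp add: mult_mono)
qed

lemma ln_shifted_ratio_ge:
  fixes N I :: real
  assumes "N \<ge> 2" and "I \<ge> N + 1"
  shows "ln (I / N) + N / I - 1 - 1 / (N - 1) \<le> ln ((I - 1) / (N - 1)) + N / (I - 1) - N / (N - 1)"
proof -
  have "ln (I / N) \<le> ln ((I - 1) / (N - 1))" using assms by (simp add: field_simps)
  moreover have "N / I \<le> N / (I - 1)" using assms by (simp add: frac_le)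
  moreover have "N / (N - 1) = 1 + 1 / (N - 1)" using assms by (simp add: field_simps)
  ultimately show ?thesis by linarith
qed

lemma hdelta_ge_h_profile:
  assumes "n \<ge> 2" and "d \<ge> 0" and "n + 1 \<le> i"
  shows "((real n - 1) / real n)\<^sup>2 * h_profile d (real i / real n) - d / (real n - 1) \<le> hdelta d n i"
proof -
  define N I where "N = real n" and "I = real i"
  define S where "S = ln ((I - 1) / (N - 1)) + N / (I - 1) - N / (N - 1)"
  define \<phi> where "\<phi> = ln (I / N) + N / I - 1"
  define c where "c = N * (N - 1) / (I * (I - 1))"
  have "N \<ge> 2" "I \<ge> N + 1" using assms by (simp_all add: N_def I_def)
  then have "I * (I - 1) > 0" "c \<ge> 0" by (simp_all add: c_def)
  have "real n + real (i - n) = I" using assms by (simp add: I_def)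
  then have "N * (N - 1) * (1 + d * S) \<le> I * (I - 1) * hdelta d n i"
    using hrec_lower_bound[OF \<open>n \<ge> 2\<close> \<open>d \<ge> 0\<close>, of "i - n"] by (simp add: hdelta_def N_def S_def)
  then have h_ge: "c * (1 + d * S) \<le> hdelta d n i"
    using \<open>I * (I - 1) > 0\<close> unfolding c_def by (simp add: pos_divide_le_eq mult.commute)
  have "d * (\<phi> - 1 / (N - 1)) \<le> d * S"
    using ln_shifted_ratio_ge[OF \<open>N \<ge> 2\<close> \<open>I \<ge> N + 1\<close>] \<open>d \<ge> 0\<close>
    unfolding S_def \<phi>_def by (intro mult_left_mono) auto
  then have "c * (1 + d * \<phi> - d / (N - 1)) \<le> c * (1 + d * S)"
    using \<open>c \<ge> 0\<close> by (intro mult_left_mono) (auto simp: algebra_simps)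
  moreover have "c * (d / (N - 1)) \<le> d / (N - 1)"
    using falling2_ratio_bounds(2)[OF \<open>N \<ge> 2\<close> \<open>I \<ge> N + 1\<close>] \<open>c \<ge> 0\<close> \<open>d \<ge> 0\<close> \<open>N \<ge> 2\<close>
    unfolding c_def[symmetric] by (intro mult_left_le_one_le) auto
  moreover have "\<phi> \<ge> 0"
    using ln_le_minus_one[of "N / I"] \<open>N \<ge> 2\<close> \<open>I \<ge> N + 1\<close> by (simp add: \<phi>_def ln_div)
  then have "(N - 1)\<^sup>2 / I\<^sup>2 * (1 + d * \<phi>) \<le> c * (1 + d * \<phi>)"
    using falling2_ratio_bounds(1)[OF \<open>N \<ge> 2\<close> \<open>I \<ge> N + 1\<close>] \<open>d \<ge> 0\<close>
    unfolding c_def[symmetric] by (intro mult_right_mono) auto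
  moreover have "(N - 1)\<^sup>2 / I\<^sup>2 * (1 + d * \<phi>) = ((N - 1) / N)\<^sup>2 * h_profile d (I / N)"
    unfolding h_profile_def \<phi>_def using \<open>N \<ge> 2\<close> \<open>I \<ge> N + 1\<close> by (simp add: field_simps)
  ultimately show ?thesis using h_ge unfolding N_def I_def by (simp add: right_diff_distrib)
qed

lemma sum_h_profile_ge:
  assumes "n \<ge> 1" and "d \<ge> 0"
  shows "real n * (h_profile_primitive d (real (n + k) / real n) - h_profile_primitive d 1)
           - real k * (2 + 5 * d) / real n
         \<le> (\<Sum>i\<in>{n + 1..n + k}. h_profile d (real i / real n))"
proof -
  have "real n > 0" using \<open>n \<ge> 1\<close> by simp
  have grid: "1 + real i * (1 / real n) = real (n + i) / real n" for i
    using \<open>real n > 0\<close> by (simp add: field_simps)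
  have "(h_profile_primitive d (1 + real k * (1 / real n)) - h_profile_primitive d 1) / (1 / real n)
          - real k * (2 + 5 * d) * (1 / real n)
        \<le> (\<Sum>i=1..k. h_profile d (1 + real i * (1 / real n)))"
    using \<open>real n > 0\<close> \<open>d \<ge> 0\<close>
    by (intro sum_grid_ge_primitive_diff[where f' = "h_profile_deriv d"] has_real_derivative_h_profile_primitive
        has_real_derivative_h_profile h_profile_deriv_ge) auto
  also have "(\<Sum>i=1..k. h_profile d (1 + real i * (1 / real n)))
             = (\<Sum>i\<in>{n + 1..n + k}. h_profile d (real i / real n))"
    unfolding grid using sum.shift_bounds_cl_nat_ivl[of "\<lambda>i. h_profile d (real i / real n)" 1 n k]
    by (simp add: add.commute)
  finally show ?thesis unfolding grid by (simp add: mult.commute)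
qed

text \<open>Here r stands for m'/m and u for 1/m.\<close>
definition average_lower_bound :: "real \<Rightarrow> real \<Rightarrow> real \<Rightarrow> real" where
  "average_lower_bound d r u =
     ((r - u) / r)\<^sup>2 * (r * (h_profile_primitive d (1 / r) - h_profile_primitive d 1) - (1 - r) * (2 + 5 * d) * u / r)
     - (1 - r) * d * u / (r - u)"

lemma average_lower_bound_eq:
  assumes "N \<ge> 2" and "M \<ge> N"
  shows "average_lower_bound d (N / M) (1 / M)
    = (((N - 1) / N)\<^sup>2 * (N * (h_profile_primitive d (M / N) - h_profile_primitive d 1) - (M - N) * (2 + 5 * d) / N)
        - (M - N) * (d / (N - 1))) / M"
proof -
  have "M > 0" using assms by simp
  have rN: "(N / M - 1 / M) / (N / M) = (N - 1) / N" and rinv: "1 / (N / M) = M / N"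
    using \<open>N \<ge> 2\<close> \<open>M > 0\<close> by (simp_all add: field_simps)
  have profile_part: "N / M * P - (1 - N / M) * C * (1 / M) / (N / M) = (N * P - (M - N) * C / N) / M" for P C
    using \<open>N \<ge> 2\<close> \<open>M > 0\<close> by (simp add: field_simps)
  have correction_part: "(1 - N / M) * d * (1 / M) / (N / M - 1 / M) = (M - N) * (d / (N - 1)) / M"
    using \<open>N \<ge> 2\<close> \<open>M > 0\<close> by (simp add: field_simps)
  show ?thesis
    unfolding average_lower_bound_def rN rinv profile_part correction_part
    by (simp only: diff_divide_distrib times_divide_eq_right right_diff_distrib)
qed

lemma average_hdelta_ge:
  assumes "n \<ge> 2" and "n \<le> m" and "d \<ge> 0"
  shows "average_lower_bound d (real n / real m) (1 / real m) \<le> 1 / real m * (\<Sum>i\<in>{n + 1..m}. hdelta d n i)"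
proof -
  define N M where "N = real n" and "M = real m"
  define K where "K = ((N - 1) / N)\<^sup>2"
  define P where "P = h_profile_primitive d (M / N) - h_profile_primitive d 1"
  obtain k where "m = n + k" using \<open>n \<le> m\<close> le_Suc_ex by blast
  have "N \<ge> 2" "M \<ge> N" "real k = M - N" using assms \<open>m = n + k\<close> by (simp_all add: N_def M_def)
  have "(\<Sum>i\<in>{n + 1..m}. K * h_profile d (real i / N) - d / (N - 1)) \<le> (\<Sum>i\<in>{n + 1..m}. hdelta d n i)"
    using hdelta_ge_h_profile[OF \<open>n \<ge> 2\<close> \<open>d \<ge> 0\<close>] by (intro sum_mono) (auto simp: K_def N_def)
  moreover have "(\<Sum>i\<in>{n + 1..m}. K * h_profile d (real i / N) - d / (N - 1))
      = K * (\<Sum>i\<in>{n + 1..m}. h_profile d (real i / N)) - real k * (d / (N - 1))"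
    by (simp add: sum_subtractf sum_distrib_left \<open>m = n + k\<close>)
  moreover have "K * (N * P - real k * (2 + 5 * d) / N) \<le> K * (\<Sum>i\<in>{n + 1..m}. h_profile d (real i / N))"
    using sum_h_profile_ge[of n d k] assms unfolding \<open>m = n + k\<close> N_def M_def K_def P_def
    by (intro mult_left_mono) auto
  ultimately have sum_ge: "K * (N * P - real k * (2 + 5 * d) / N) - real k * (d / (N - 1))
      \<le> (\<Sum>i\<in>{n + 1..m}. hdelta d n i)"
    by linarith
  then show ?thesis
    using average_lower_bound_eq[OF \<open>N \<ge> 2\<close> \<open>M \<ge> N\<close>, of d] \<open>M \<ge> N\<close> \<open>N \<ge> 2\<close>
    unfolding N_def[symmetric] M_def[symmetric] K_def[symmetric] P_def[symmetric] \<open>real k = M - N\<close>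
    by (simp add: divide_right_mono)
qed

lemma tendsto_average_lower_bound:
  assumes "(r \<longlongrightarrow> \<alpha>) F" and "(u \<longlongrightarrow> 0) F" and "\<alpha> > 0"
  shows "((\<lambda>x. average_lower_bound d (r x) (u x)) \<longlongrightarrow> average_lower_bound d \<alpha> 0) F"
  unfolding average_lower_bound_def h_profile_primitive_def using assms
  by (intro tendsto_intros) auto

lemma average_lower_bound_at_zero:
  assumes "\<alpha> > 0"
  shows "average_lower_bound d \<alpha> 0 = \<alpha> - \<alpha>\<^sup>2 + d * \<alpha>\<^sup>2 * ln \<alpha> + d / 2 * (\<alpha> - \<alpha> ^ 3)"
  unfolding average_lower_bound_def h_profile_primitive_def using assms
  by (simp add: ln_div field_simps power2_eq_square power3_eq_cube)

lemma mprime_div_tendsto: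
  assumes "\<alpha> \<ge> 0"
  shows "(\<lambda>m. real (mprime \<alpha> m) / real m) \<longlonglongrightarrow> \<alpha>"
proof (rule tendsto_sandwich[of "\<lambda>m. \<alpha> - 1 / real m" _ _ "\<lambda>m. \<alpha>"])
  have floor: "real (mprime \<alpha> m) = of_int \<lfloor>\<alpha> * real m\<rfloor>" for m
    unfolding mprime_def using assms by simp
  show "\<forall>\<^sub>F m in sequentially. \<alpha> - 1 / real m \<le> real (mprime \<alpha> m) / real m"
    using eventually_gt_at_top[of 0]
  proof eventually_elim
    case (elim m)
    have "(\<alpha> * real m - 1) / real m \<le> of_int \<lfloor>\<alpha> * real m\<rfloor> / real m"
      by (intro divide_right_mono) linarith+
    then show ?case using elim unfolding floor by (simp add: field_simps)
  qed
  show "\<forall>\<^sub>F m in sequentially. real (mprime \<alpha> m) / real m \<le> \<alpha>"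
    using eventually_gt_at_top[of 0]
  proof eventually_elim
    case (elim m)
    have "of_int \<lfloor>\<alpha> * real m\<rfloor> / real m \<le> \<alpha> * real m / real m"
      by (intro divide_right_mono) linarith+
    then show ?case using elim unfolding floor by simp
  qed
  show "(\<lambda>m. \<alpha> - 1 / real m) \<longlonglongrightarrow> \<alpha>"
    using tendsto_diff[OF tendsto_const lim_const_over_n, of \<alpha> 1] by simp
qed simp

lemma eventually_mprime_between:
  assumes "0 < \<alpha>" and "\<alpha> \<le> 1"
  shows "\<forall>\<^sub>F m in sequentially. 2 \<le> mprime \<alpha> m \<and> mprime \<alpha> m \<le> m"
  using eventually_ge_at_top[of "nat \<lceil>2 / \<alpha>\<rceil>"]
proof eventually_elim
  case (elim m)
  then have "real m \<ge> 2 / \<alpha>" by linarith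
  then have "\<alpha> * real m \<ge> 2" using assms by (simp add: field_simps)
  moreover have "\<alpha> * real m \<le> real m" using assms by (simp add: mult_left_le_one_le)
  ultimately show ?case unfolding mprime_def by linarith
qed

theorem lemma4p8:
  fixes \<alpha> \<delta> :: real
  assumes "0 < \<alpha>" and "\<alpha> < 1" and "0 \<le> \<delta>"
  shows "liminf (\<lambda>m::nat. ereal ((1 / real m) *
            (\<Sum>i\<in>{mprime \<alpha> m + 1..m}. hdelta \<delta> (mprime \<alpha> m) i)))
         \<ge> ereal (\<alpha> - \<alpha>^2 + \<delta> * \<alpha>^2 * ln \<alpha> + \<delta> / 2 * (\<alpha> - \<alpha>^3))"
proof -
  define bound where "bound m = average_lower_bound \<delta> (real (mprime \<alpha> m) / real m) (1 / real m)" for m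
  have "bound \<longlonglongrightarrow> \<alpha> - \<alpha>^2 + \<delta> * \<alpha>^2 * ln \<alpha> + \<delta> / 2 * (\<alpha> - \<alpha>^3)"
    unfolding bound_def average_lower_bound_at_zero[OF \<open>0 < \<alpha>\<close>, symmetric]
    using assms by (intro tendsto_average_lower_bound mprime_div_tendsto lim_const_over_n) auto
  then have "liminf (\<lambda>m. ereal (bound m)) = ereal (\<alpha> - \<alpha>^2 + \<delta> * \<alpha>^2 * ln \<alpha> + \<delta> / 2 * (\<alpha> - \<alpha>^3))"
    by (intro lim_imp_Liminf) auto
  moreover have "\<forall>\<^sub>F m in sequentially. ereal (bound m)
      \<le> ereal ((1 / real m) * (\<Sum>i\<in>{mprime \<alpha> m + 1..m}. hdelta \<delta> (mprime \<alpha> m) i))"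
    using eventually_mprime_between[OF \<open>0 < \<alpha>\<close> less_imp_le[OF \<open>\<alpha> < 1\<close>]]
    by (elim eventually_mono)
      (simp only: bound_def ereal_less_eq(3), rule average_hdelta_ge; use \<open>0 \<le> \<delta>\<close> in simp)
  then have "liminf (\<lambda>m. ereal (bound m))
      \<le> liminf (\<lambda>m. ereal ((1 / real m) * (\<Sum>i\<in>{mprime \<alpha> m + 1..m}. hdelta \<delta> (mprime \<alpha> m) i)))"
    by (rule Liminf_mono)
  ultimately show ?thesis by simp
qed

end
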